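(* Let $\mathcal J$ be a dyadic integer and let $K=\sum_{s\ge\mathcal J,\,s\text{ dyadic}}K_s$ and $L=\sum_{s\ge\mathcal J,\,s\text{ dyadic}}L_s$ be CZ kernels, where each $K_s$, $L_s$ is a CZ building block of scale $s$. Then $K*L$ is also a CZ kernel which is a dyadic sum of CZ building blocks of scales $\ge\mathcal J$, and $$\|K*L\|_{CZ}\le C\|K\|_{CZ}\|L\|_{CZ},$$ with a constant $C$ independent of $\mathcal J$.
   Context: Dyadic integers are powers of $2$. Fix a universal $\omega>0$. For dyadic $s$, a kernel $K:\mathbb Z\to\mathbb C$ is a CZ building block of scale $s$ with constant $D>0$ if (i) $\sum_xK(x)=0$; (ii) $\operatorname{supp}K\subset[-s,s]$; (iii) $\sum_x|K(x)|^2\le D^2/s$; (iv) $\sum_x|K(x+h)-K(x)|^2\le \frac{D^2}{s}(\frac{|h|}{s})^\omega$ for all $h\in\mathbb Z$. A CZ kernel is $K=\sum_{s\text{ dyadic}}K_s$ with each $K_s$ a CZ building block of scale $s$; $\|K\|_{CZ}$ is the infimum over such representations of the supremum of the constants $D$ of the blocks. Convolution is on $\mathbb Z$. *)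

theory Defs
  imports "HOL-Analysis.Analysis"
begin

text \<open>Kernels are functions int \<Rightarrow> complex. Dyadic integers are 2^k, k a natural number.
  The universal exponent omega is an explicit parameter.\<close>

definition cz_block :: "real \<Rightarrow> int \<Rightarrow> real \<Rightarrow> (int \<Rightarrow> complex) \<Rightarrow> bool" where
  "cz_block \<omega> s D K \<longleftrightarrow>
     D > 0 \<and>
     (\<Sum>\<^sub>\<infinity>x. K x) = 0 \<and>
     (\<forall>x. K x \<noteq> 0 \<longrightarrow> -s \<le> x \<and> x \<le> s) \<and>
     (\<Sum>\<^sub>\<infinity>x. (cmod (K x))\<^sup>2) \<le> D\<^sup>2 / real_of_int s \<and>
     (\<forall>h::int. (\<Sum>\<^sub>\<infinity>x. (cmod (K (x + h) - K x))\<^sup>2)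
                 \<le> D\<^sup>2 / real_of_int s * (real_of_int \<bar>h\<bar> / real_of_int s) powr \<omega>)"

definition cz_rep :: "real \<Rightarrow> nat \<Rightarrow> real \<Rightarrow> (int \<Rightarrow> complex) \<Rightarrow> bool" where
  "cz_rep \<omega> j D K \<longleftrightarrow>
     (\<exists>Ks :: nat \<Rightarrow> int \<Rightarrow> complex.
        (\<forall>k<j. Ks k = (\<lambda>_. 0)) \<and>
        (\<forall>k\<ge>j. cz_block \<omega> (2 ^ k) D (Ks k)) \<and>
        (\<forall>x. (\<lambda>k. Ks k x) sums K x))"

definition cz_kernel_from :: "real \<Rightarrow> nat \<Rightarrow> (int \<Rightarrow> complex) \<Rightarrow> bool" where
  "cz_kernel_from \<omega> j K \<longleftrightarrow> (\<exists>D. cz_rep \<omega> j D K)"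

definition cz_norm_from :: "real \<Rightarrow> nat \<Rightarrow> (int \<Rightarrow> complex) \<Rightarrow> real" where
  "cz_norm_from \<omega> j K = Inf {D. cz_rep \<omega> j D K}"

definition conv :: "(int \<Rightarrow> complex) \<Rightarrow> (int \<Rightarrow> complex) \<Rightarrow> int \<Rightarrow> complex" where
  "conv K L x = (\<Sum>\<^sub>\<infinity>y. K y * L (x - y))"

end

theory Submission
  imports Defs
begin

text \<open>Group the double series \<open>K * L = \<Sum>\<^sub>k \<Sum>\<^sub>l K\<^sub>k * L\<^sub>l\<close> by the larger scale: the
  \<open>u\<close>-th piece is \<open>(\<Sum>\<^sub>k\<^sub>\<le>\<^sub>u K\<^sub>k) * L\<^sub>u + (\<Sum>\<^sub>l\<^sub><\<^sub>u L\<^sub>l) * K\<^sub>u\<close>.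
  A block of scale \<open>s\<close> has Fourier transform \<open>O(D min ((s\<bar>\<theta>\<bar>)\<^sup>\<delta>, (s\<bar>\<theta>\<bar>)\<^sup>-\<^sup>\<delta>))\<close>: at low
  frequencies because its mean vanishes, at high frequencies by its Hoelder regularity. These
  bounds sum geometrically over dyadic \<open>s\<close>, so the partial sums have Fourier transforms bounded
  independently of \<open>u\<close> and of the smallest scale. By Parseval, convolution with such a partial
  sum is bounded on \<open>l\<^sup>2\<close>, hence the \<open>u\<close>-th piece satisfies the size and regularity conditions of
  a block of scale \<open>2\<^sup>u\<^sup>+\<^sup>1\<close>, and its mean vanishes with those of \<open>K\<^sub>u\<close> and \<open>L\<^sub>u\<close>. The pieces
  sum to \<open>K * L\<close> because block series converge in \<open>l\<^sup>2\<close>, where convolution is continuous.\<close>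

section \<open>Finitely supported kernels and convolution\<close>

definition supported_in :: "int \<Rightarrow> (int \<Rightarrow> 'a::zero) \<Rightarrow> bool" where
  "supported_in R f \<longleftrightarrow> (\<forall>x. f x \<noteq> 0 \<longrightarrow> -R \<le> x \<and> x \<le> R)"

lemma supported_inD: "supported_in R f \<Longrightarrow> x \<notin> {-R..R} \<Longrightarrow> f x = 0"
  unfolding supported_in_def by auto

lemma supported_in_mono: "supported_in R f \<Longrightarrow> R \<le> R' \<Longrightarrow> supported_in R' f"
  unfolding supported_in_def by force

lemma supported_in_add:
  fixes f g :: "int \<Rightarrow> 'a::monoid_add"
  shows "supported_in R f \<Longrightarrow> supported_in R g \<Longrightarrow> supported_in R (\<lambda>x. f x + g x)"
  unfolding supported_in_def by (metis add_0)

lemma supported_in_sum: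
  assumes "\<And>k. k \<in> A \<Longrightarrow> supported_in R (F k)"
  shows "supported_in R (\<lambda>x. \<Sum>k\<in>A. F k x)"
  unfolding supported_in_def
proof (intro allI impI)
  fix x assume "(\<Sum>k\<in>A. F k x) \<noteq> 0"
  then obtain k where "k \<in> A" "F k x \<noteq> 0" by (meson sum.neutral)
  then show "- R \<le> x \<and> x \<le> R" using assms unfolding supported_in_def by blast
qed

lemma supported_in_diff_translate:
  fixes g :: "int \<Rightarrow> 'a::group_add"
  shows "supported_in R g \<Longrightarrow> supported_in (R + \<bar>h\<bar>) (\<lambda>x. g (x + h) - g x)"
proof (unfold supported_in_def, intro allI impI)
  assume g: "\<forall>x. g x \<noteq> 0 \<longrightarrow> -R \<le> x \<and> x \<le> R"
  fix x assume "g (x + h) - g x \<noteq> 0"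
  then have "g (x + h) \<noteq> 0 \<or> g x \<noteq> 0" by auto
  then show "- (R + \<bar>h\<bar>) \<le> x \<and> x \<le> R + \<bar>h\<bar>"
    using g[rule_format, of x] g[rule_format, of "x + h"] by linarith
qed

lemma infsum_int_interval:
  fixes g :: "int \<Rightarrow> 'a::{comm_monoid_add,t2_space}"
  assumes "\<And>x. x \<notin> {-R..R} \<Longrightarrow> g x = 0"
  shows "(\<Sum>\<^sub>\<infinity>x. g x) = (\<Sum>x\<in>{-R..R}. g x)"
proof -
  have "(\<Sum>\<^sub>\<infinity>x. g x) = (\<Sum>\<^sub>\<infinity>x\<in>{-R..R}. g x)"
    by (rule infsum_cong_neutral) (use assms in fastforce)+
  then show ?thesis by simp
qed

lemma summable_on_int_interval:
  fixes g :: "int \<Rightarrow> 'a::{comm_monoid_add,topological_space}"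
  assumes "\<And>x. x \<notin> {-R..R} \<Longrightarrow> g x = 0"
  shows "g summable_on UNIV"
  by (rule finite_nonzero_values_imp_summable_on, rule finite_subset[of _ "{-R..R}"])
    (use assms in fastforce)+

lemma bij_betw_int_reflect: "bij_betw (\<lambda>y::int. x - y) UNIV UNIV"
  by (rule bij_betwI[where g="\<lambda>y. x - y"]) auto

lemma bij_betw_int_translate: "bij_betw (\<lambda>y::int. y + h) UNIV UNIV"
  by (rule bij_betwI[where g="\<lambda>y. y - h"]) auto

lemma conv_commute: "conv f g = conv g f"
proof
  fix x
  have "conv f g x = (\<Sum>\<^sub>\<infinity>y. f (x - y) * g (x - (x - y)))"
    unfolding conv_def by (rule infsum_reindex_bij_betw[OF bij_betw_int_reflect, symmetric])
  then show "conv f g x = conv g f x" unfolding conv_def by (simp add: mult.commute)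
qed

lemma conv_translate: "conv f g (x + h) = conv f (\<lambda>z. g (z + h)) x"
  unfolding conv_def by (simp add: algebra_simps)

lemma conv_eq_sum:
  assumes "supported_in R f"
  shows "conv f g x = (\<Sum>y\<in>{-R..R}. f y * g (x - y))"
  unfolding conv_def by (rule infsum_int_interval) (use supported_inD[OF assms] in auto)

lemma supported_in_conv:
  assumes "supported_in R1 f" "supported_in R2 g"
  shows "supported_in (R1 + R2) (conv f g)"
  unfolding supported_in_def
proof (intro allI impI)
  fix x assume "conv f g x \<noteq> 0"
  then obtain y where "y \<in> {-R1..R1}" "f y * g (x - y) \<noteq> 0"
    unfolding conv_eq_sum[OF assms(1)] by (meson sum.neutral)
  then show "- (R1 + R2) \<le> x \<and> x \<le> R1 + R2" using assms unfolding supported_in_def by force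
qed

lemma conv_sum_left:
  assumes "\<And>k. k \<in> A \<Longrightarrow> supported_in R (F k)"
  shows "conv (\<lambda>x. \<Sum>k\<in>A. F k x) g x = (\<Sum>k\<in>A. conv (F k) g x)"
proof -
  have "conv (\<lambda>x. \<Sum>k\<in>A. F k x) g x = (\<Sum>y\<in>{-R..R}. (\<Sum>k\<in>A. F k y) * g (x - y))"
    by (rule conv_eq_sum[OF supported_in_sum[OF assms]])
  also have "\<dots> = (\<Sum>k\<in>A. \<Sum>y\<in>{-R..R}. F k y * g (x - y))"
    by (simp add: sum_distrib_right sum.swap[of _ "{-R..R}"])
  also have "\<dots> = (\<Sum>k\<in>A. conv (F k) g x)"
    by (intro sum.cong refl conv_eq_sum[symmetric] assms)
  finally show ?thesis .
qed

lemma conv_sum_right: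
  assumes "\<And>k. k \<in> A \<Longrightarrow> supported_in R (G k)"
  shows "conv f (\<lambda>x. \<Sum>k\<in>A. G k x) x = (\<Sum>k\<in>A. conv f (G k) x)"
  using conv_sum_left[OF assms] by (simp add: conv_commute)

lemma conv_diff_right:
  assumes "supported_in R f"
  shows "conv f (\<lambda>z. g1 z - g2 z) x = conv f g1 x - conv f g2 x"
  unfolding conv_eq_sum[OF assms] by (simp add: sum_subtractf algebra_simps)

section \<open>Fourier series\<close>

definition fourier :: "(int \<Rightarrow> complex) \<Rightarrow> real \<Rightarrow> complex" where
  "fourier f \<xi> = (\<Sum>\<^sub>\<infinity>x. f x * cis (- (of_int x * \<xi>)))"

lemma fourier_eq_sum:
  assumes "supported_in R f"
  shows "fourier f \<xi> = (\<Sum>x\<in>{-R..R}. f x * cis (- (of_int x * \<xi>)))"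
  unfolding fourier_def by (rule infsum_int_interval) (use supported_inD[OF assms] in auto)

lemma fourier_zero: "fourier f 0 = (\<Sum>\<^sub>\<infinity>x. f x)"
  unfolding fourier_def by simp

lemma fourier_periodic: "fourier f (\<xi> + 2 * pi * of_int n) = fourier f \<xi>"
  unfolding fourier_def
proof (intro infsum_cong)
  fix x :: int
  have "cis (- (of_int x * (\<xi> + 2 * pi * of_int n)))
      = cis (- (of_int x * \<xi>)) * cis (2 * pi * of_int (- x * n))"
    unfolding cis_mult by (simp add: algebra_simps)
  also have "cis (2 * pi * of_int (- x * n)) = 1" by (rule cis_multiple_2pi) simp
  finally show "f x * cis (- (of_int x * (\<xi> + 2 * pi * of_int n))) = f x * cis (- (of_int x * \<xi>))"
    by simp
qed

lemma fourier_translate: "fourier (\<lambda>x. f (x - y)) \<xi> = cis (- (of_int y * \<xi>)) * fourier f \<xi>"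
proof -
  have "fourier (\<lambda>x. f (x - y)) \<xi> = (\<Sum>\<^sub>\<infinity>x. f (x + y - y) * cis (- (of_int (x + y) * \<xi>)))"
    unfolding fourier_def by (rule infsum_reindex_bij_betw[OF bij_betw_int_translate, symmetric])
  also have "\<dots> = (\<Sum>\<^sub>\<infinity>x. cis (- (of_int y * \<xi>)) * (f x * cis (- (of_int x * \<xi>))))"
    by (intro infsum_cong) (simp add: cis_mult algebra_simps)
  also have "\<dots> = cis (- (of_int y * \<xi>)) * fourier f \<xi>"
    unfolding fourier_def by (rule infsum_cmult_right')
  finally show ?thesis .
qed

lemma fourier_sum:
  assumes "\<And>k. k \<in> A \<Longrightarrow> supported_in R (F k)"
  shows "fourier (\<lambda>x. \<Sum>k\<in>A. F k x) \<xi> = (\<Sum>k\<in>A. fourier (F k) \<xi>)"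
proof -
  have "fourier (\<lambda>x. \<Sum>k\<in>A. F k x) \<xi> = (\<Sum>x\<in>{-R..R}. (\<Sum>k\<in>A. F k x) * cis (- (of_int x * \<xi>)))"
    by (rule fourier_eq_sum[OF supported_in_sum[OF assms]])
  also have "\<dots> = (\<Sum>k\<in>A. \<Sum>x\<in>{-R..R}. F k x * cis (- (of_int x * \<xi>)))"
    unfolding sum_distrib_right by (rule sum.swap)
  also have "\<dots> = (\<Sum>k\<in>A. fourier (F k) \<xi>)"
    by (intro sum.cong refl fourier_eq_sum[symmetric] assms)
  finally show ?thesis .
qed

lemma fourier_diff_translate:
  assumes "supported_in R f"
  shows "fourier (\<lambda>x. f (x + h) - f x) \<xi> = (cis (of_int h * \<xi>) - 1) * fourier f \<xi>"
proof -
  have R: "supported_in (R + \<bar>h\<bar>) f" by (rule supported_in_mono[OF assms]) simp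
  have Rh: "supported_in (R + \<bar>h\<bar>) (\<lambda>x. f (x - - h))"
    using assms unfolding supported_in_def by force
  have "fourier (\<lambda>x. f (x + h) - f x) \<xi> = fourier (\<lambda>x. f (x - - h)) \<xi> - fourier f \<xi>"
    unfolding fourier_eq_sum[OF supported_in_diff_translate[OF assms]] fourier_eq_sum[OF R]
      fourier_eq_sum[OF Rh] by (simp add: sum_subtractf algebra_simps)
  then show ?thesis unfolding fourier_translate by (simp add: algebra_simps)
qed

lemma fourier_conv:
  assumes "supported_in R1 f" "supported_in R2 g"
  shows "fourier (conv f g) \<xi> = fourier f \<xi> * fourier g \<xi>"
proof -
  let ?W = "{-(R1 + R2)..R1 + R2}"
  have translate: "(\<Sum>z\<in>?W. g (z - y) * cis (- (of_int z * \<xi>))) = cis (- (of_int y * \<xi>)) * fourier g \<xi>"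
    if "y \<in> {-R1..R1}" for y
  proof -
    have "supported_in (R1 + R2) (\<lambda>z. g (z - y))"
      using assms(2) that unfolding supported_in_def by force
    then show ?thesis using fourier_eq_sum fourier_translate by metis
  qed
  have "fourier (conv f g) \<xi> = (\<Sum>z\<in>?W. \<Sum>y\<in>{-R1..R1}. f y * (g (z - y) * cis (- (of_int z * \<xi>))))"
    unfolding fourier_eq_sum[OF supported_in_conv[OF assms(1,2)]] conv_eq_sum[OF assms(1)]
    by (simp add: sum_distrib_right mult.assoc)
  also have "\<dots> = (\<Sum>y\<in>{-R1..R1}. f y * (\<Sum>z\<in>?W. g (z - y) * cis (- (of_int z * \<xi>))))"
    by (subst sum.swap) (simp add: sum_distrib_left)
  also have "\<dots> = (\<Sum>y\<in>{-R1..R1}. f y * (cis (- (of_int y * \<xi>)) * fourier g \<xi>))"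
    by (intro sum.cong refl arg_cong2[where f="(*)"] translate)
  also have "\<dots> = fourier f \<xi> * fourier g \<xi>"
    unfolding fourier_eq_sum[OF assms(1)] by (simp add: sum_distrib_right mult.assoc)
  finally show ?thesis .
qed

lemma sum_roots_of_unity:
  fixes d :: int and N :: nat
  assumes "\<bar>d\<bar> < int N"
  shows "(\<Sum>m<N. cis (2 * pi * real m * of_int d / real N)) = (if d = 0 then of_nat N else 0)"
proof (cases "d = 0")
  case False
  have N: "N > 0" using assms by linarith
  define w where "w = cis (2 * pi * of_int d / real N)"
  have pw: "cis (2 * pi * real m * of_int d / real N) = w ^ m" for m
    unfolding w_def Complex.DeMoivre by (simp add: algebra_simps)
  have "w ^ N = cis (2 * pi * of_int d)" unfolding w_def Complex.DeMoivre using N by simp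
  also have "\<dots> = 1" by (rule cis_multiple_2pi) simp
  finally have wN: "w ^ N = 1" .
  have "w \<noteq> 1"
  proof
    assume "w = 1"
    then have "cos (2 * pi * of_int d / real N) = 1" unfolding w_def
      by (metis cis.sel(1) one_complex.sel(1))
    then obtain k :: int where "2 * pi * of_int d / real N = real_of_int k * 2 * pi"
      using cos_one_2pi_int by blast
    then have "real_of_int d = real_of_int k * real N" using N by (simp add: field_simps)
    then have "d = k * int N" by (metis of_int_eq_iff of_int_mult of_int_of_nat_eq)
    then show False using assms False
      by (cases "k = 0") (auto simp: abs_mult dest!: mult_le_cancel_right1[THEN iffD1, rotated])
  qed
  then show ?thesis using False wN by (simp add: pw sum_gp_strict)
qed simp

lemma sampled_parseval:
  assumes "supported_in R f" "0 \<le> R"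
  defines "N \<equiv> nat (2 * R + 1)"
  shows "(\<Sum>m<N. (cmod (fourier f (2 * pi * real m / real N)))\<^sup>2) = real N * (\<Sum>x\<in>{-R..R}. (cmod (f x))\<^sup>2)"
proof -
  define I where "I = {-R..R}"
  have square: "complex_of_real ((cmod (fourier f (2 * pi * real m / real N)))\<^sup>2)
     = (\<Sum>x\<in>I. \<Sum>y\<in>I. f x * cnj (f y) * cis (2 * pi * real m * of_int (y - x) / real N))" for m
  proof -
    define \<xi> where "\<xi> = 2 * pi * real m / real N"
    have "complex_of_real ((cmod (fourier f \<xi>))\<^sup>2) = fourier f \<xi> * cnj (fourier f \<xi>)"
      by (rule complex_norm_square)
    also have "\<dots> = (\<Sum>x\<in>I. f x * cis (- (of_int x * \<xi>))) * (\<Sum>y\<in>I. cnj (f y) * cis (of_int y * \<xi>))"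
      unfolding fourier_eq_sum[OF assms(1)] I_def by (simp add: cis_cnj)
    also have "\<dots> = (\<Sum>x\<in>I. \<Sum>y\<in>I. f x * cnj (f y) * (cis (- (of_int x * \<xi>)) * cis (of_int y * \<xi>)))"
      unfolding sum_product by (simp add: algebra_simps)
    also have "\<dots> = (\<Sum>x\<in>I. \<Sum>y\<in>I. f x * cnj (f y) * cis (2 * pi * real m * of_int (y - x) / real N))"
      unfolding cis_mult \<xi>_def by (simp add: algebra_simps diff_divide_distrib)
    finally show ?thesis unfolding \<xi>_def .
  qed
  have orthogonality: "(\<Sum>y\<in>I. f x * cnj (f y) * (\<Sum>m<N. cis (2 * pi * real m * of_int (y - x) / real N)))
      = f x * cnj (f x) * of_nat N" if "x \<in> I" for x
  proof -
    have "(\<Sum>m<N. cis (2 * pi * real m * of_int (y - x) / real N)) = (if y = x then of_nat N else 0)"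
      if "y \<in> I" for y
    proof -
      have "\<bar>y - x\<bar> < int N" using \<open>x \<in> I\<close> \<open>y \<in> I\<close> assms(2) unfolding I_def N_def by auto
      then show ?thesis using sum_roots_of_unity[of "y - x" N] by simp
    qed
    then have "(\<Sum>y\<in>I. f x * cnj (f y) * (\<Sum>m<N. cis (2 * pi * real m * of_int (y - x) / real N)))
        = (\<Sum>y\<in>I. if y = x then f x * cnj (f y) * of_nat N else 0)"
      by (intro sum.cong refl) auto
    then show ?thesis using \<open>x \<in> I\<close> by (simp add: I_def)
  qed
  have "complex_of_real (\<Sum>m<N. (cmod (fourier f (2 * pi * real m / real N)))\<^sup>2)
      = (\<Sum>x\<in>I. \<Sum>y\<in>I. f x * cnj (f y) * (\<Sum>m<N. cis (2 * pi * real m * of_int (y - x) / real N)))"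
    unfolding of_real_sum square by (simp add: sum.swap[of _ "{..<N}"] sum_distrib_left)
  also have "\<dots> = (\<Sum>x\<in>I. f x * cnj (f x) * of_nat N)"
    using orthogonality by (rule sum.cong[OF refl])
  also have "\<dots> = complex_of_real (real N * (\<Sum>x\<in>I. (cmod (f x))\<^sup>2))"
    unfolding of_real_mult of_real_sum complex_norm_square by (simp add: sum_distrib_left algebra_simps)
  finally show ?thesis unfolding I_def of_real_eq_iff .
qed

lemma infsum_norm_conv_le:
  assumes "supported_in R f" "supported_in R g" "0 \<le> R" "\<And>\<xi>. cmod (fourier f \<xi>) \<le> B"
  shows "(\<Sum>\<^sub>\<infinity>x. (cmod (conv f g x))\<^sup>2) \<le> B\<^sup>2 * (\<Sum>\<^sub>\<infinity>x. (cmod (g x))\<^sup>2)"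
proof -
  define N where "N = nat (2 * (R + R) + 1)"
  define W where "W = {-(R + R)..R + R}"
  have R: "0 \<le> R + R" using assms(3) by simp
  have fg: "supported_in (R + R) (conv f g)" by (rule supported_in_conv[OF assms(1,2)])
  have g: "supported_in (R + R) g" by (rule supported_in_mono[OF assms(2)]) (use assms(3) in simp)
  have "real N * (\<Sum>x\<in>W. (cmod (conv f g x))\<^sup>2)
      = (\<Sum>m<N. (cmod (fourier (conv f g) (2 * pi * real m / real N)))\<^sup>2)"
    unfolding N_def W_def by (rule sampled_parseval[OF fg R, symmetric])
  also have "\<dots> = (\<Sum>m<N. (cmod (fourier f (2 * pi * real m / real N)))\<^sup>2
                        * (cmod (fourier g (2 * pi * real m / real N)))\<^sup>2)"
    by (simp add: fourier_conv[OF assms(1,2)] norm_mult power_mult_distrib)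
  also have "\<dots> \<le> (\<Sum>m<N. B\<^sup>2 * (cmod (fourier g (2 * pi * real m / real N)))\<^sup>2)"
    by (intro sum_mono mult_right_mono power_mono assms(4)) auto
  also have "\<dots> = real N * (B\<^sup>2 * (\<Sum>x\<in>W. (cmod (g x))\<^sup>2))"
    unfolding sum_distrib_left[symmetric] N_def W_def sampled_parseval[OF g R] by simp
  finally have "(\<Sum>x\<in>W. (cmod (conv f g x))\<^sup>2) \<le> B\<^sup>2 * (\<Sum>x\<in>W. (cmod (g x))\<^sup>2)"
    unfolding N_def using R by simp
  then show ?thesis
    unfolding W_def using infsum_int_interval[of "R + R" "\<lambda>x. (cmod (conv f g x))\<^sup>2"]
      infsum_int_interval[of "R + R" "\<lambda>x. (cmod (g x))\<^sup>2"] supported_inD[OF fg] supported_inD[OF g]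
    by simp
qed

section \<open>Square summable kernels\<close>

definition square_summable :: "(int \<Rightarrow> complex) \<Rightarrow> bool" where
  "square_summable f \<longleftrightarrow> (\<lambda>x. (cmod (f x))\<^sup>2) summable_on UNIV"

definition l2_norm :: "(int \<Rightarrow> complex) \<Rightarrow> real" where
  "l2_norm f = sqrt (\<Sum>\<^sub>\<infinity>x. (cmod (f x))\<^sup>2)"

lemma l2_norm_nonneg: "0 \<le> l2_norm f"
  unfolding l2_norm_def by (simp add: infsum_nonneg)

lemma square_summable_if_supported: "supported_in R f \<Longrightarrow> square_summable f"
  unfolding square_summable_def by (rule summable_on_int_interval) (auto dest: supported_inD)

lemma L2_set_le_l2_norm: "square_summable f \<Longrightarrow> finite Y \<Longrightarrow> L2_set (\<lambda>y. cmod (f y)) Y \<le> l2_norm f"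
  unfolding L2_set_def l2_norm_def square_summable_def
  by (intro real_sqrt_le_mono finite_sum_le_infsum) auto

lemma nonneg_summable_on_if_finite_sums_le:
  fixes \<phi> :: "'a \<Rightarrow> real"
  assumes "\<And>x. 0 \<le> \<phi> x" "\<And>F. finite F \<Longrightarrow> sum \<phi> F \<le> B"
  shows "\<phi> summable_on UNIV" "(\<Sum>\<^sub>\<infinity>x. \<phi> x) \<le> B"
proof -
  show s: "\<phi> summable_on UNIV"
    by (rule nonneg_bdd_above_summable_on) (use assms in \<open>auto intro!: bdd_aboveI2\<close>)
  show "(\<Sum>\<^sub>\<infinity>x. \<phi> x) \<le> B" by (rule infsum_le_finite_sums[OF s]) (use assms in auto)
qed

lemma L2_set_sum_le: "L2_set (\<lambda>y. \<Sum>k\<in>A. F k y) Y \<le> (\<Sum>k\<in>A. L2_set (F k) Y)"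
proof (induction A rule: infinite_finite_induct)
  case (insert k A)
  have "L2_set (\<lambda>y. F k y + (\<Sum>k\<in>A. F k y)) Y \<le> L2_set (F k) Y + L2_set (\<lambda>y. \<Sum>k\<in>A. F k y) Y"
    by (rule L2_set_triangle_ineq)
  then show ?case using insert by simp
qed (simp_all add: L2_set_def)

lemma square_summable_sums:
  assumes "\<And>k. square_summable (F k)" "summable (\<lambda>k. l2_norm (F k))" "\<And>x. (\<lambda>k. F k x) sums G x"
  shows "square_summable G" "l2_norm G \<le> (\<Sum>k. l2_norm (F k))"
proof -
  define S where "S = (\<Sum>k. l2_norm (F k))"
  have S: "0 \<le> S" unfolding S_def by (intro suminf_nonneg assms(2) l2_norm_nonneg)
  have finite_sums: "(\<Sum>y\<in>Y. (cmod (G y))\<^sup>2) \<le> S\<^sup>2" if "finite Y" for Y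
  proof -
    have partial_sums: "(\<Sum>y\<in>Y. (cmod (\<Sum>k<n. F k y))\<^sup>2) \<le> S\<^sup>2" for n
    proof -
      have "L2_set (\<lambda>y. cmod (\<Sum>k<n. F k y)) Y \<le> L2_set (\<lambda>y. \<Sum>k<n. cmod (F k y)) Y"
        by (rule L2_set_mono) (auto intro: norm_sum)
      also have "\<dots> \<le> (\<Sum>k<n. L2_set (\<lambda>y. cmod (F k y)) Y)" by (rule L2_set_sum_le)
      also have "\<dots> \<le> (\<Sum>k<n. l2_norm (F k))" by (intro sum_mono L2_set_le_l2_norm assms(1) that)
      also have "\<dots> \<le> S" unfolding S_def by (intro sum_le_suminf assms(2)) (auto intro: l2_norm_nonneg)
      finally have "(L2_set (\<lambda>y. cmod (\<Sum>k<n. F k y)) Y)\<^sup>2 \<le> S\<^sup>2" by (intro power_mono) auto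
      then show ?thesis unfolding L2_set_def by (simp add: sum_nonneg)
    qed
    have "(\<lambda>n. \<Sum>y\<in>Y. (cmod (\<Sum>k<n. F k y))\<^sup>2) \<longlonglongrightarrow> (\<Sum>y\<in>Y. (cmod (G y))\<^sup>2)"
      using assms(3) unfolding sums_def by (intro tendsto_sum tendsto_power tendsto_norm) auto
    then show ?thesis by (rule LIMSEQ_le_const2) (use partial_sums in auto)
  qed
  show "square_summable G"
    unfolding square_summable_def by (rule nonneg_summable_on_if_finite_sums_le) (use finite_sums in auto)
  have "(\<Sum>\<^sub>\<infinity>x. (cmod (G x))\<^sup>2) \<le> S\<^sup>2"
    by (rule nonneg_summable_on_if_finite_sums_le) (use finite_sums in auto)
  then show "l2_norm G \<le> S" unfolding l2_norm_def using S real_sqrt_le_mono by fastforce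
qed

lemma square_summable_reflect:
  assumes "square_summable g"
  shows "square_summable (\<lambda>y. g (x - y))" "l2_norm (\<lambda>y. g (x - y)) = l2_norm g"
  using summable_on_reindex_bij_betw[OF bij_betw_int_reflect, of "\<lambda>z. (cmod (g z))\<^sup>2" x]
    infsum_reindex_bij_betw[OF bij_betw_int_reflect, of "\<lambda>z. (cmod (g z))\<^sup>2" x] assms
  unfolding square_summable_def l2_norm_def by simp_all

lemma cauchy_schwarz_infsum:
  assumes "square_summable f" "square_summable g"
  shows "(\<lambda>y. f y * g y) summable_on UNIV" "cmod (\<Sum>\<^sub>\<infinity>y. f y * g y) \<le> l2_norm f * l2_norm g"
proof -
  have finite_sums: "(\<Sum>y\<in>Y. cmod (f y * g y)) \<le> l2_norm f * l2_norm g" if "finite Y" for Y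
  proof -
    have "(\<Sum>y\<in>Y. cmod (f y * g y)) = (\<Sum>y\<in>Y. \<bar>cmod (f y)\<bar> * \<bar>cmod (g y)\<bar>)" by (simp add: norm_mult)
    also have "\<dots> \<le> L2_set (\<lambda>y. cmod (f y)) Y * L2_set (\<lambda>y. cmod (g y)) Y" by (rule L2_set_mult_ineq)
    also have "\<dots> \<le> l2_norm f * l2_norm g"
      by (intro mult_mono L2_set_le_l2_norm assms that l2_norm_nonneg L2_set_nonneg)
    finally show ?thesis .
  qed
  have abs: "(\<lambda>y. cmod (f y * g y)) summable_on UNIV"
    by (rule nonneg_summable_on_if_finite_sums_le) (use finite_sums in auto)
  then show "(\<lambda>y. f y * g y) summable_on UNIV" using summable_on_iff_abs_summable_on_complex by blast
  have "cmod (\<Sum>\<^sub>\<infinity>y. f y * g y) \<le> (\<Sum>\<^sub>\<infinity>y. cmod (f y * g y))"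
    by (rule norm_infsum_bound) (use abs in auto)
  also have "\<dots> \<le> l2_norm f * l2_norm g"
    by (rule nonneg_summable_on_if_finite_sums_le) (use finite_sums in auto)
  finally show "cmod (\<Sum>\<^sub>\<infinity>y. f y * g y) \<le> l2_norm f * l2_norm g" .
qed

lemma conv_cauchy_schwarz:
  assumes "square_summable f" "square_summable g"
  shows "(\<lambda>y. f y * g (x - y)) summable_on UNIV" "cmod (conv f g x) \<le> l2_norm f * l2_norm g"
  using cauchy_schwarz_infsum[OF assms(1) square_summable_reflect(1)[OF assms(2)]]
  unfolding conv_def square_summable_reflect(2)[OF assms(2)] by simp_all

lemma tendsto_conv_l2:
  assumes f: "square_summable f" "\<And>n. square_summable (df n)" "(\<lambda>n. l2_norm (df n)) \<longlonglongrightarrow> 0"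
    and g: "square_summable g" "\<And>n. square_summable (dg n)" "(\<lambda>n. l2_norm (dg n)) \<longlonglongrightarrow> 0"
  shows "(\<lambda>n. conv (\<lambda>y. f y - df n y) (\<lambda>y. g y - dg n y) x) \<longlonglongrightarrow> conv f g x"
proof (rule LIM_zero_cancel, rule Lim_null_comparison[where g="\<lambda>n. l2_norm (df n) * l2_norm g + l2_norm f * l2_norm (dg n)
                                              + l2_norm (df n) * l2_norm (dg n)"])
  show "((\<lambda>n. l2_norm (df n) * l2_norm g + l2_norm f * l2_norm (dg n) + l2_norm (df n) * l2_norm (dg n))
          \<longlongrightarrow> 0) sequentially"
    using tendsto_add[OF tendsto_add[OF tendsto_mult_left_zero[OF f(3)] tendsto_mult_right_zero[OF g(3)]]
        tendsto_mult_zero[OF f(3) g(3)]] by simp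
  show "\<forall>\<^sub>F n in sequentially. norm (conv (\<lambda>y. f y - df n y) (\<lambda>y. g y - dg n y) x - conv f g x)
          \<le> l2_norm (df n) * l2_norm g + l2_norm f * l2_norm (dg n) + l2_norm (df n) * l2_norm (dg n)"
  proof (intro always_eventually allI)
    fix n
    have sums: "((\<lambda>y. a y * b (x - y)) has_sum conv a b x) UNIV"
      if "square_summable a" "square_summable b" for a b
      unfolding conv_def using conv_cauchy_schwarz(1)[OF that] by (rule has_sum_infsum)
    have "((\<lambda>y. f y * g (x - y) + - (df n y * g (x - y)) + - (f y * dg n (x - y)) + df n y * dg n (x - y))
          has_sum (conv f g x + - conv (df n) g x + - conv f (dg n) x + conv (df n) (dg n) x)) UNIV"
      by (intro has_sum_add has_sum_uminusI sums f g)
    moreover have "(\<lambda>y. f y * g (x - y) + - (df n y * g (x - y)) + - (f y * dg n (x - y)) + df n y * dg n (x - y))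
        = (\<lambda>y. (f y - df n y) * (g (x - y) - dg n (x - y)))"
      by (simp add: algebra_simps)
    ultimately have "conv (\<lambda>y. f y - df n y) (\<lambda>y. g y - dg n y) x - conv f g x
        = - conv (df n) g x - conv f (dg n) x + conv (df n) (dg n) x"
      unfolding conv_def by (simp add: infsumI)
    also have "cmod \<dots> \<le> cmod (- conv (df n) g x - conv f (dg n) x) + cmod (conv (df n) (dg n) x)"
      by (rule norm_triangle_ineq)
    also have "\<dots> \<le> cmod (conv (df n) g x) + cmod (conv f (dg n) x) + cmod (conv (df n) (dg n) x)"
      using norm_triangle_ineq4[of "- conv (df n) g x" "conv f (dg n) x"] by simp
    also have "\<dots> \<le> l2_norm (df n) * l2_norm g + l2_norm f * l2_norm (dg n) + l2_norm (df n) * l2_norm (dg n)"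
      by (intro add_mono conv_cauchy_schwarz(2) f g)
    finally show "norm (conv (\<lambda>y. f y - df n y) (\<lambda>y. g y - dg n y) x - conv f g x)
          \<le> l2_norm (df n) * l2_norm g + l2_norm f * l2_norm (dg n) + l2_norm (df n) * l2_norm (dg n)" .
  qed
qed

section \<open>Fourier decay of a building block\<close>

lemma cmod_cis_minus_one_sq: "(cmod (cis t - 1))\<^sup>2 = 2 - 2 * cos t"
proof -
  have "(cmod (cis t - 1))\<^sup>2 = (cos t - 1)\<^sup>2 + (sin t)\<^sup>2" by (simp add: cmod_power2)
  also have "\<dots> = 2 - 2 * cos t" using sin_cos_squared_add[of t] by (simp add: power2_eq_square algebra_simps)
  finally show ?thesis .
qed

lemma cmod_cis_minus_one_le: "cmod (cis t - 1) \<le> \<bar>t\<bar>"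
proof -
  have "(cmod (cis t - 1))\<^sup>2 = 4 * (sin (t/2))\<^sup>2"
    unfolding cmod_cis_minus_one_sq using cos_double_sin[of "t/2"] by simp
  also have "\<dots> \<le> 4 * (t/2)\<^sup>2"
    using abs_sin_x_le_abs_x[of "t/2"] abs_le_square_iff[of "sin (t/2)" "t/2"] by simp
  also have "\<dots> = \<bar>t\<bar>\<^sup>2" by (simp add: power2_eq_square)
  finally show ?thesis by (metis abs_norm_cancel abs_le_square_iff power2_abs)
qed

lemma one_le_cmod_cis_minus_one:
  assumes "pi/2 \<le> \<bar>t\<bar>" "\<bar>t\<bar> \<le> pi"
  shows "1 \<le> cmod (cis t - 1)"
proof -
  have "0 \<le> cos (pi - \<bar>t\<bar>)" by (rule cos_ge_zero) (use assms in auto)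
  then have "cos t \<le> 0" by (cases "t \<ge> 0") auto
  then have "1 \<le> (cmod (cis t - 1))\<^sup>2" unfolding cmod_cis_minus_one_sq by simp
  then show ?thesis by (metis abs_norm_cancel abs_le_square_iff one_power2 abs_one)
qed

lemma sum_abs_le_sqrt_card_sum_squares:
  fixes f :: "'a \<Rightarrow> real"
  shows "(\<Sum>x\<in>I. \<bar>f x\<bar>) \<le> sqrt (real (card I) * (\<Sum>x\<in>I. (f x)\<^sup>2))"
proof -
  have "(\<Sum>x\<in>I. \<bar>f x\<bar> * \<bar>1\<bar>) \<le> L2_set f I * L2_set (\<lambda>_. 1::real) I" by (rule L2_set_mult_ineq)
  then show ?thesis unfolding L2_set_def by (simp add: real_sqrt_mult mult.commute)
qed

lemma norm_fourier_le_sum: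
  assumes "supported_in R f"
  shows "cmod (fourier f \<xi>) \<le> (\<Sum>x\<in>{-R..R}. cmod (f x))"
  unfolding fourier_eq_sum[OF assms] by (rule order_trans[OF norm_sum]) (simp add: norm_mult)

lemma reduce_angle: "\<exists>\<theta> n. \<xi> = \<theta> + 2 * pi * of_int n \<and> \<bar>\<theta>\<bar> \<le> pi"
proof -
  define n where "n = \<lfloor>\<xi> / (2*pi) + 1/2\<rfloor>"
  have "real_of_int n \<le> \<xi> / (2*pi) + 1/2" "\<xi> / (2*pi) + 1/2 < real_of_int n + 1"
    unfolding n_def by linarith+
  then have "2 * pi * of_int n \<le> \<xi> + pi" "\<xi> + pi < 2 * pi * of_int n + 2 * pi"
    using pi_gt_zero by (simp_all add: field_simps)
  then show ?thesis by (intro exI[of _ "\<xi> - 2 * pi * of_int n"] exI[of _ n]) auto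
qed

definition dyadic_decay :: "real \<Rightarrow> real \<Rightarrow> real" where
  "dyadic_decay \<delta> a = (if a \<le> 1 then a powr \<delta> else a powr (-\<delta>))"

lemma supported_in_if_cz_block: "cz_block \<omega> s D K \<Longrightarrow> supported_in s K"
  unfolding cz_block_def supported_in_def by auto

locale cz_building_block =
  fixes \<omega> :: real and s :: int and D :: real and K :: "int \<Rightarrow> complex"
  assumes block: "cz_block \<omega> s D K" and scale_pos: "0 < s" and exponent_pos: "0 < \<omega>"
begin

lemma constant_pos: "0 < D"
  using block unfolding cz_block_def by auto

lemma supported: "supported_in s K"
  by (rule supported_in_if_cz_block[OF block])

lemma fourier_at_zero: "fourier K 0 = 0"
  using block unfolding cz_block_def fourier_zero by auto

lemma infsum_norm_sq_le: "(\<Sum>\<^sub>\<infinity>x. (cmod (K x))\<^sup>2) \<le> D\<^sup>2 / s"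
  using block unfolding cz_block_def by auto

lemma infsum_norm_diff_sq_le:
  "(\<Sum>\<^sub>\<infinity>x. (cmod (K (x + h) - K x))\<^sup>2) \<le> D\<^sup>2 / s * (\<bar>h\<bar> / s) powr \<omega>"
  using block unfolding cz_block_def by auto

lemma sum_norm_le: "(\<Sum>x\<in>{-s..s}. cmod (K x)) \<le> sqrt 3 * D"
proof -
  have squares: "(\<Sum>x\<in>{-s..s}. (cmod (K x))\<^sup>2) \<le> D\<^sup>2 / s"
    using infsum_norm_sq_le infsum_int_interval[of s "\<lambda>x. (cmod (K x))\<^sup>2"] supported_inD[OF supported]
    by auto
  have card: "real (card {-s..s}) \<le> 3 * s" using scale_pos by simp
  have "(\<Sum>x\<in>{-s..s}. cmod (K x)) \<le> sqrt (real (card {-s..s}) * (\<Sum>x\<in>{-s..s}. (cmod (K x))\<^sup>2))"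
    using sum_abs_le_sqrt_card_sum_squares[of "\<lambda>x. cmod (K x)" "{-s..s}"] by simp
  also have "\<dots> \<le> sqrt ((3 * s) * (D\<^sup>2 / s))"
    using scale_pos by (intro real_sqrt_le_mono mult_mono card squares) (auto simp: sum_nonneg)
  also have "\<dots> = sqrt 3 * D" using scale_pos constant_pos by (simp add: real_sqrt_mult)
  finally show ?thesis .
qed

text \<open>Low frequencies: the vanishing mean lets the phase enter only through \<open>cis t - 1 = O(t)\<close>.\<close>

lemma norm_fourier_le_low:
  fixes \<theta> :: real
  shows "cmod (fourier K \<theta>) \<le> sqrt 3 * D * (s * \<bar>\<theta>\<bar>)"
proof -
  have "fourier K \<theta> = fourier K \<theta> - fourier K 0" using fourier_at_zero by simp
  also have "\<dots> = (\<Sum>x\<in>{-s..s}. K x * (cis (- (of_int x * \<theta>)) - 1))"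
    unfolding fourier_eq_sum[OF supported] by (simp add: sum_subtractf algebra_simps)
  finally have "cmod (fourier K \<theta>) \<le> (\<Sum>x\<in>{-s..s}. cmod (K x * (cis (- (of_int x * \<theta>)) - 1)))"
    by (simp add: norm_sum)
  also have "\<dots> \<le> (\<Sum>x\<in>{-s..s}. cmod (K x) * (s * \<bar>\<theta>\<bar>))"
  proof (rule sum_mono)
    fix x assume x: "x \<in> {-s..s}"
    have "cmod (cis (- (of_int x * \<theta>)) - 1) \<le> \<bar>of_int x * \<theta>\<bar>"
      using cmod_cis_minus_one_le[of "- (of_int x * \<theta>)"] by simp
    also have "\<dots> \<le> s * \<bar>\<theta>\<bar>" using x by (auto simp: abs_mult intro!: mult_right_mono)
    finally show "cmod (K x * (cis (- (of_int x * \<theta>)) - 1)) \<le> cmod (K x) * (s * \<bar>\<theta>\<bar>)"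
      by (simp add: norm_mult mult_left_mono)
  qed
  also have "\<dots> \<le> sqrt 3 * D * (s * \<bar>\<theta>\<bar>)"
    unfolding sum_distrib_right[symmetric] by (rule mult_right_mono[OF sum_norm_le]) (use scale_pos in auto)
  finally show ?thesis .
qed

text \<open>High frequencies: with \<open>h = \<lfloor>pi / \<bar>\<theta>\<bar>\<rfloor>\<close> the factor \<open>cis (h \<theta>) - 1\<close> has modulus at least 1, so
  the Hoelder regularity of \<open>K\<close> at step \<open>h\<close> controls \<open>fourier K \<theta>\<close>.\<close>

lemma norm_fourier_le_high:
  fixes \<theta> :: real
  assumes \<theta>: "0 < \<bar>\<theta>\<bar>" "\<bar>\<theta>\<bar> \<le> pi" and high: "1 \<le> s * \<bar>\<theta>\<bar>"
  shows "cmod (fourier K \<theta>) \<le> sqrt 11 * D * sqrt ((pi / (s * \<bar>\<theta>\<bar>)) powr \<omega>)"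
proof -
  define h where "h = \<lfloor>pi / \<bar>\<theta>\<bar>\<rfloor>"
  have h: "real_of_int h \<le> pi / \<bar>\<theta>\<bar>" "pi / \<bar>\<theta>\<bar> < real_of_int h + 1" unfolding h_def by linarith+
  have "1 \<le> pi / \<bar>\<theta>\<bar>" using \<theta> by (simp add: field_simps)
  then have h_pos: "1 \<le> h" unfolding h_def by linarith
  have "real_of_int h * \<bar>\<theta>\<bar> \<le> pi" "pi < real_of_int h * \<bar>\<theta>\<bar> + \<bar>\<theta>\<bar>" "\<bar>\<theta>\<bar> \<le> real_of_int h * \<bar>\<theta>\<bar>"
    using h h_pos \<theta> by (simp_all add: field_simps)
  moreover have "\<bar>of_int h * \<theta>\<bar> = real_of_int h * \<bar>\<theta>\<bar>" using h_pos by (simp add: abs_mult)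
  ultimately have "1 \<le> cmod (cis (of_int h * \<theta>) - 1)"
    by (intro one_le_cmod_cis_minus_one) linarith+
  define W where "W = {-(s + \<bar>h\<bar>)..s + \<bar>h\<bar>}"
  define A where "A = D\<^sup>2 / s * (\<bar>h\<bar> / s) powr \<omega>"
  have diff: "supported_in (s + \<bar>h\<bar>) (\<lambda>x. K (x + h) - K x)"
    by (rule supported_in_diff_translate[OF supported])
  have squares: "(\<Sum>x\<in>W. (cmod (K (x + h) - K x))\<^sup>2) \<le> A"
    using infsum_norm_diff_sq_le[of h] infsum_int_interval[of "s + \<bar>h\<bar>" "\<lambda>x. (cmod (K (x + h) - K x))\<^sup>2"]
      supported_inD[OF diff] unfolding W_def A_def by auto
  have card: "real (card W) \<le> 11 * s"
  proof -
    have "pi / \<bar>\<theta>\<bar> \<le> pi * s" using high \<theta> by (simp add: field_simps)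
    then have "real_of_int h \<le> pi * s" using h(1) by linarith
    also have "\<dots> \<le> 4 * real_of_int s" using pi_less_4 scale_pos by (intro mult_right_mono) auto
    finally have "real_of_int h \<le> 4 * real_of_int s" .
    moreover have "1 \<le> real_of_int s" using scale_pos by simp
    moreover have "real (card W) = 2 * real_of_int h + 2 * real_of_int s + 1"
      unfolding W_def using h_pos scale_pos by simp
    ultimately show ?thesis by linarith
  qed
  have "(\<bar>h\<bar> / s) powr \<omega> \<le> (pi / (s * \<bar>\<theta>\<bar>)) powr \<omega>"
    using h(1) h_pos scale_pos \<theta> exponent_pos by (intro powr_mono2) (auto simp: field_simps)
  then have "sqrt ((\<bar>h\<bar> / s) powr \<omega>) \<le> sqrt ((pi / (s * \<bar>\<theta>\<bar>)) powr \<omega>)"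
    by (rule real_sqrt_le_mono)
  have "cmod (fourier K \<theta>) \<le> cmod (cis (of_int h * \<theta>) - 1) * cmod (fourier K \<theta>)"
    using \<open>1 \<le> cmod (cis (of_int h * \<theta>) - 1)\<close> by (simp add: mult_le_cancel_right1)
  also have "\<dots> = cmod (fourier (\<lambda>x. K (x + h) - K x) \<theta>)"
    unfolding fourier_diff_translate[OF supported] norm_mult ..
  also have "\<dots> \<le> (\<Sum>x\<in>W. cmod (K (x + h) - K x))"
    unfolding W_def by (rule norm_fourier_le_sum[OF diff])
  also have "\<dots> \<le> sqrt (real (card W) * (\<Sum>x\<in>W. (cmod (K (x + h) - K x))\<^sup>2))"
    using sum_abs_le_sqrt_card_sum_squares[of "\<lambda>x. cmod (K (x + h) - K x)" W] by simp
  also have "\<dots> \<le> sqrt ((11 * s) * A)"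
    using scale_pos by (intro real_sqrt_le_mono mult_mono card squares) (auto simp: sum_nonneg)
  also have "\<dots> = sqrt 11 * D * sqrt ((\<bar>h\<bar> / s) powr \<omega>)"
    unfolding A_def using scale_pos constant_pos by (simp add: real_sqrt_mult)
  also have "\<dots> \<le> sqrt 11 * D * sqrt ((pi / (s * \<bar>\<theta>\<bar>)) powr \<omega>)"
    using \<open>sqrt ((\<bar>h\<bar> / s) powr \<omega>) \<le> _\<close> constant_pos by (intro mult_left_mono) auto
  finally show ?thesis .
qed

lemma norm_fourier_le_decay:
  fixes \<theta> :: real
  assumes "\<bar>\<theta>\<bar> \<le> pi"
  shows "cmod (fourier K \<theta>) \<le> sqrt 11 * pi powr (\<omega>/2) * D * dyadic_decay (min 1 (\<omega>/2)) (of_int s * \<bar>\<theta>\<bar>)"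
proof -
  define a where "a = real_of_int s * \<bar>\<theta>\<bar>"
  define \<delta> where "\<delta> = min 1 (\<omega>/2)"
  have a: "0 \<le> a" unfolding a_def using scale_pos by simp
  have pi_powr: "1 \<le> pi powr (\<omega>/2)" using exponent_pos pi_gt3 by (intro ge_one_powr_ge_zero) auto
  show ?thesis
  proof (cases "a \<le> 1")
    case True
    have "a \<le> a powr \<delta>"
    proof (cases "a = 0")
      case False
      then have "a powr 1 \<le> a powr \<delta>" using a True exponent_pos unfolding \<delta>_def by (intro powr_mono') auto
      then show ?thesis using False a by simp
    qed simp
    moreover have "sqrt 3 * D \<le> sqrt 11 * pi powr (\<omega>/2) * D"
      using pi_powr constant_pos by (intro mult_right_mono) (auto intro: order_trans[of _ "sqrt 11"])
    ultimately have "sqrt 3 * D * a \<le> sqrt 11 * pi powr (\<omega>/2) * D * a powr \<delta>"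
      using a constant_pos by (intro mult_mono) auto
    then show ?thesis using norm_fourier_le_low[of \<theta>] True unfolding a_def \<delta>_def dyadic_decay_def by simp
  next
    case False
    then have "0 < \<bar>\<theta>\<bar>" unfolding a_def by (cases "\<theta> = 0") auto
    have "sqrt ((pi / a) powr \<omega>) = pi powr (\<omega>/2) * a powr (-(\<omega>/2))"
      using False by (simp add: powr_half_sqrt[symmetric] powr_powr powr_divide powr_minus_divide)
    also have "\<dots> \<le> pi powr (\<omega>/2) * a powr (-\<delta>)"
      using False unfolding \<delta>_def by (intro mult_left_mono powr_mono) auto
    finally have "sqrt 11 * D * sqrt ((pi / a) powr \<omega>) \<le> sqrt 11 * D * (pi powr (\<omega>/2) * a powr (-\<delta>))"
      using constant_pos by (intro mult_left_mono) auto
    with norm_fourier_le_high[OF \<open>0 < \<bar>\<theta>\<bar>\<close> assms] False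
    have "cmod (fourier K \<theta>) \<le> sqrt 11 * D * (pi powr (\<omega>/2) * a powr (-\<delta>))"
      unfolding a_def by linarith
    then show ?thesis using False unfolding a_def \<delta>_def dyadic_decay_def by (simp add: mult_ac)
  qed
qed

end

section \<open>Sums over dyadic scales\<close>

lemma sum_le_geometric_if_inj:
  fixes f :: "'a \<Rightarrow> real" and q :: real
  assumes "finite A" "inj_on \<phi> A" "\<And>k. k \<in> A \<Longrightarrow> f k \<le> q ^ \<phi> k" "0 \<le> q" "q < 1"
  shows "sum f A \<le> 1 / (1 - q)"
proof -
  have "sum f A \<le> (\<Sum>k\<in>A. q ^ \<phi> k)" by (rule sum_mono) (use assms in auto)
  also have "\<dots> = (\<Sum>i\<in>\<phi> ` A. q ^ i)" using sum.reindex[OF assms(2), of "\<lambda>i. q ^ i"] by simp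
  also have "\<dots> \<le> (\<Sum>i<Suc (Max (\<phi> ` A)). q ^ i)"
    by (rule sum_mono2) (use assms(1,4) in \<open>auto simp: less_Suc_eq_le\<close>)
  also have "\<dots> = (1 - q ^ Suc (Max (\<phi> ` A))) / (1 - q)" unfolding sum_gp_strict using assms by simp
  also have "\<dots> \<le> 1 / (1 - q)" using assms by (intro divide_right_mono) auto
  finally show ?thesis .
qed

lemma two_power_powr: "((2::real) ^ n) powr \<delta> = (2 powr \<delta>) ^ n"
  by (simp add: powr_realpow[symmetric] powr_powr mult.commute)

lemma dyadic_decay_sum_le:
  assumes "0 < \<delta>" "0 < t" "finite A"
  shows "(\<Sum>k\<in>A. dyadic_decay \<delta> (2 ^ k * t)) \<le> 2 / (1 - 2 powr (-\<delta>))"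
proof -
  define q where "q = (2::real) powr (-\<delta>)"
  have q: "0 \<le> q" "q < 1" unfolding q_def using assms powr_less_mono[of "-\<delta>" 0 "2::real"] by auto
  define A1 where "A1 = {k\<in>A. 2 ^ k * t \<le> 1}"
  define A2 where "A2 = {k\<in>A. \<not> 2 ^ k * t \<le> 1}"
  have fin: "finite A1" "finite A2" unfolding A1_def A2_def using assms by auto
  have low: "(\<Sum>k\<in>A1. dyadic_decay \<delta> (2 ^ k * t)) \<le> 1 / (1 - q)"
  proof (cases "A1 = {}")
    case False
    define M where "M = Max A1"
    have M: "k \<le> M" if "k \<in> A1" for k unfolding M_def using fin that by simp
    have "M \<in> A1" unfolding M_def using fin False by simp
    show ?thesis
    proof (rule sum_le_geometric_if_inj[OF fin(1), of "\<lambda>k. M - k"])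
      show "inj_on (\<lambda>k. M - k) A1"
      proof (rule inj_onI)
        fix k l assume "k \<in> A1" "l \<in> A1" "M - k = M - l"
        then show "k = l" using M[of k] M[of l] by linarith
      qed
      fix k assume k: "k \<in> A1"
      have "2 ^ k * t = (2 ^ M * t) / 2 ^ (M - k)" using M[OF k] by (simp add: power_diff)
      then have "dyadic_decay \<delta> (2 ^ k * t) = (2 ^ M * t) powr \<delta> / (2 ^ (M - k)) powr \<delta>"
        using k assms unfolding dyadic_decay_def A1_def by (simp add: powr_divide)
      also have "\<dots> \<le> 1 / (2 ^ (M - k)) powr \<delta>"
        using \<open>M \<in> A1\<close> assms unfolding A1_def by (intro divide_right_mono) (auto intro: powr_le1)
      also have "\<dots> = q ^ (M - k)"
        unfolding q_def two_power_powr by (simp add: powr_minus_divide power_one_over)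
      finally show "dyadic_decay \<delta> (2 ^ k * t) \<le> q ^ (M - k)" .
    qed (use q in auto)
  qed (use q in simp)
  have high: "(\<Sum>k\<in>A2. dyadic_decay \<delta> (2 ^ k * t)) \<le> 1 / (1 - q)"
  proof (cases "A2 = {}")
    case False
    define m where "m = Min A2"
    have m: "m \<le> k" if "k \<in> A2" for k unfolding m_def using fin that by simp
    have "m \<in> A2" unfolding m_def using fin False by simp
    show ?thesis
    proof (rule sum_le_geometric_if_inj[OF fin(2), of "\<lambda>k. k - m"])
      show "inj_on (\<lambda>k. k - m) A2"
      proof (rule inj_onI)
        fix k l assume "k \<in> A2" "l \<in> A2" "k - m = l - m"
        then show "k = l" using m[of k] m[of l] by linarith
      qed
      fix k assume k: "k \<in> A2"
      have "2 ^ k * t = (2 ^ m * t) * 2 ^ (k - m)" using m[OF k] by (simp add: power_add[symmetric])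
      then have "dyadic_decay \<delta> (2 ^ k * t) = (2 ^ m * t) powr (-\<delta>) * (2 ^ (k - m)) powr (-\<delta>)"
        using k assms unfolding dyadic_decay_def A2_def by (simp add: powr_mult)
      also have "\<dots> \<le> 1 * (2 ^ (k - m)) powr (-\<delta>)"
      proof (rule mult_right_mono)
        have "1 \<le> (2 ^ m * t) powr \<delta>"
          using \<open>m \<in> A2\<close> assms unfolding A2_def by (intro ge_one_powr_ge_zero) auto
        then show "(2 ^ m * t) powr (-\<delta>) \<le> 1" unfolding powr_minus_divide by (simp add: divide_le_eq_1)
      qed simp
      also have "\<dots> = q ^ (k - m)"
        unfolding q_def two_power_powr[symmetric] by (simp add: powr_powr powr_realpow[symmetric] mult.commute)
      finally show "dyadic_decay \<delta> (2 ^ k * t) \<le> q ^ (k - m)" .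
    qed (use q in auto)
  qed (use q in simp)
  have "A = A1 \<union> A2" "A1 \<inter> A2 = {}" unfolding A1_def A2_def by auto
  then have "(\<Sum>k\<in>A. dyadic_decay \<delta> (2 ^ k * t))
      = (\<Sum>k\<in>A1. dyadic_decay \<delta> (2 ^ k * t)) + (\<Sum>k\<in>A2. dyadic_decay \<delta> (2 ^ k * t))"
    using fin by (simp add: sum.union_disjoint)
  then show ?thesis using low high unfolding q_def by simp
qed

definition fourier_sum_bound :: "real \<Rightarrow> real" where
  "fourier_sum_bound \<omega> = sqrt 11 * pi powr (\<omega>/2) * (2 / (1 - 2 powr (- min 1 (\<omega>/2))))"

lemma fourier_sum_bound_pos: "0 < \<omega> \<Longrightarrow> 0 < fourier_sum_bound \<omega>"
  using powr_less_mono[of "- min 1 (\<omega>/2)" 0 "2::real"] unfolding fourier_sum_bound_def by simp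

lemma norm_fourier_dyadic_sum_le:
  assumes "0 < \<omega>" "\<And>k. cz_block \<omega> (2 ^ k) D (Ks k)" "finite A"
  shows "cmod (fourier (\<lambda>x. \<Sum>k\<in>A. Ks k x) \<xi>) \<le> fourier_sum_bound \<omega> * D"
proof -
  interpret Ks: cz_building_block \<omega> "2 ^ k" D "Ks k" for k
    using assms by unfold_locales auto
  have supported: "supported_in (\<Sum>k\<in>A. 2 ^ k) (Ks k)" if "k \<in> A" for k
    by (rule supported_in_mono[OF Ks.supported]) (use that assms(3) in \<open>auto intro: member_le_sum\<close>)
  obtain \<theta> n where \<theta>: "\<xi> = \<theta> + 2 * pi * of_int n" "\<bar>\<theta>\<bar> \<le> pi" using reduce_angle by blast
  have "fourier (\<lambda>x. \<Sum>k\<in>A. Ks k x) \<theta> = (\<Sum>k\<in>A. fourier (Ks k) \<theta>)"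
    by (rule fourier_sum[OF supported])
  then have "cmod (fourier (\<lambda>x. \<Sum>k\<in>A. Ks k x) \<xi>) = cmod (\<Sum>k\<in>A. fourier (Ks k) \<theta>)"
    unfolding \<theta>(1) fourier_periodic by simp
  also have "\<dots> \<le> (\<Sum>k\<in>A. cmod (fourier (Ks k) \<theta>))" by (rule norm_sum)
  also have "\<dots> \<le> fourier_sum_bound \<omega> * D"
  proof (cases "\<theta> = 0")
    case True
    then show ?thesis using Ks.fourier_at_zero fourier_sum_bound_pos[OF assms(1)] Ks.constant_pos
      by simp
  next
    case False
    define \<delta> where "\<delta> = min 1 (\<omega>/2)"
    have "(\<Sum>k\<in>A. cmod (fourier (Ks k) \<theta>))
        \<le> (\<Sum>k\<in>A. sqrt 11 * pi powr (\<omega>/2) * D * dyadic_decay \<delta> (2 ^ k * \<bar>\<theta>\<bar>))"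
      by (intro sum_mono) (use Ks.norm_fourier_le_decay \<theta>(2) in \<open>auto simp: \<delta>_def\<close>)
    also have "\<dots> = sqrt 11 * pi powr (\<omega>/2) * D * (\<Sum>k\<in>A. dyadic_decay \<delta> (2 ^ k * \<bar>\<theta>\<bar>))"
      by (simp add: sum_distrib_left)
    also have "\<dots> \<le> sqrt 11 * pi powr (\<omega>/2) * D * (2 / (1 - 2 powr (-\<delta>)))"
      using False assms Ks.constant_pos unfolding \<delta>_def
      by (intro mult_left_mono dyadic_decay_sum_le) auto
    also have "\<dots> = fourier_sum_bound \<omega> * D" unfolding fourier_sum_bound_def \<delta>_def by simp
    finally show ?thesis .
  qed
  finally show ?thesis .
qed

section \<open>Convolution of two dyadic block sums\<close>

lemma norm_add_sq_le: "(cmod (a + b))\<^sup>2 \<le> 2 * (cmod a)\<^sup>2 + 2 * (cmod b)\<^sup>2"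
proof -
  have "(cmod (a + b))\<^sup>2 \<le> (cmod a + cmod b)\<^sup>2" by (simp add: norm_triangle_ineq power_mono)
  also have "\<dots> \<le> 2 * (cmod a)\<^sup>2 + 2 * (cmod b)\<^sup>2"
    using sum_squares_ge_zero[of "cmod a - cmod b" 0] by (simp add: power2_eq_square algebra_simps)
  finally show ?thesis .
qed

lemma infsum_norm_sq_add_le:
  assumes "supported_in R f" "supported_in R g"
  shows "(\<Sum>\<^sub>\<infinity>x. (cmod (f x + g x))\<^sup>2) \<le> 2 * (\<Sum>\<^sub>\<infinity>x. (cmod (f x))\<^sup>2) + 2 * (\<Sum>\<^sub>\<infinity>x. (cmod (g x))\<^sup>2)"
proof -
  have finite: "(\<Sum>\<^sub>\<infinity>x. (cmod (F x))\<^sup>2) = (\<Sum>x\<in>{-R..R}. (cmod (F x))\<^sup>2)"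
    if "supported_in R F" for F :: "int \<Rightarrow> complex"
    by (rule infsum_int_interval) (use supported_inD[OF that] in auto)
  have "(\<Sum>x\<in>{-R..R}. (cmod (f x + g x))\<^sup>2) \<le> (\<Sum>x\<in>{-R..R}. 2 * (cmod (f x))\<^sup>2 + 2 * (cmod (g x))\<^sup>2)"
    by (intro sum_mono norm_add_sq_le)
  then show ?thesis unfolding finite[OF assms(1)] finite[OF assms(2)] finite[OF supported_in_add[OF assms]]
    by (simp add: sum.distrib sum_distrib_left)
qed

lemma sum_square_by_max:
  fixes c :: "nat \<Rightarrow> nat \<Rightarrow> 'a::comm_monoid_add"
  shows "(\<Sum>k<N. \<Sum>l<N. c k l) = (\<Sum>u<N. (\<Sum>k\<le>u. c k u) + (\<Sum>l<u. c u l))"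
proof (induction N)
  case (Suc N)
  have "(\<Sum>k<Suc N. \<Sum>l<Suc N. c k l) = (\<Sum>k<N. \<Sum>l<N. c k l) + ((\<Sum>k<N. c k N) + c N N + (\<Sum>l<N. c N l))"
    by (simp add: sum.distrib algebra_simps)
  also have "(\<Sum>k<N. c k N) + c N N = (\<Sum>k\<le>N. c k N)"
    by (simp add: lessThan_Suc_atMost[symmetric])
  finally show ?case using Suc by (simp add: algebra_simps)
qed simp

lemma l2_norm_le_if_cz_block:
  assumes "cz_block \<omega> s D K" "0 < s"
  shows "l2_norm K \<le> D / sqrt s"
proof -
  have "l2_norm K \<le> sqrt (D\<^sup>2 / s)"
    unfolding l2_norm_def using assms(1) unfolding cz_block_def by (auto intro: real_sqrt_le_mono)
  then show ?thesis using assms unfolding cz_block_def by (simp add: real_sqrt_divide)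
qed

lemma cz_block_series_l2:
  assumes blocks: "\<And>k. cz_block \<omega> (2 ^ k) D (F k)" and sums: "\<And>x. (\<lambda>k. F k x) sums G x"
  shows "square_summable G" "\<And>N. square_summable (\<lambda>x. G x - (\<Sum>k<N. F k x))"
    "(\<lambda>N. l2_norm (\<lambda>x. G x - (\<Sum>k<N. F k x))) \<longlonglongrightarrow> 0"
proof -
  have square_summable: "square_summable (F k)" for k
    by (rule square_summable_if_supported[OF supported_in_if_cz_block[OF blocks]])
  have "l2_norm (F k) \<le> D * (1 / sqrt 2) ^ k" for k
    using l2_norm_le_if_cz_block[OF blocks[of k]] by (simp add: real_sqrt_power power_divide)
  then have summable: "summable (\<lambda>k. l2_norm (F k))"
    by (intro summable_comparison_test'[OF summable_mult[OF summable_geometric]])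
      (auto simp: l2_norm_nonneg)
  have tail: "square_summable (\<lambda>x. G x - (\<Sum>k<N. F k x))"
    "l2_norm (\<lambda>x. G x - (\<Sum>k<N. F k x)) \<le> (\<Sum>k. l2_norm (F (k + N)))" for N
    using square_summable_sums[OF square_summable summable_ignore_initial_segment[OF summable]
        sums_split_initial_segment[OF sums]] by blast+
  show "square_summable G" by (rule square_summable_sums[OF square_summable summable sums])
  show "\<And>N. square_summable (\<lambda>x. G x - (\<Sum>k<N. F k x))" by (rule tail)
  show "(\<lambda>N. l2_norm (\<lambda>x. G x - (\<Sum>k<N. F k x))) \<longlonglongrightarrow> 0"
  proof (rule tendsto_sandwich[OF _ _ tendsto_const suminf_exist_split2[OF summable]])
    show "\<forall>\<^sub>F N in sequentially. 0 \<le> l2_norm (\<lambda>x. G x - (\<Sum>k<N. F k x))"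
      by (simp add: l2_norm_nonneg)
    show "\<forall>\<^sub>F N in sequentially. l2_norm (\<lambda>x. G x - (\<Sum>k<N. F k x)) \<le> (\<Sum>k. l2_norm (F (k + N)))"
      by (intro always_eventually allI tail(2))
  qed
qed

text \<open>The factor \<open>8 * 2 powr \<omega>\<close> pays for the factor 4 in the estimate of a piece and for passing
  from scale \<open>2\<^sup>u\<close> to the scale \<open>2\<^sup>u\<^sup>+\<^sup>1\<close> at which the piece is a building block.\<close>

definition conv_bound :: "real \<Rightarrow> real" where
  "conv_bound \<omega> = fourier_sum_bound \<omega> * sqrt (8 * 2 powr \<omega>)"

locale cz_block_pair =
  fixes \<omega> :: real and D1 D2 :: real and Ks Ls :: "nat \<Rightarrow> int \<Rightarrow> complex"
  assumes exponent_pos: "0 < \<omega>"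
    and Ks_block: "\<And>k. cz_block \<omega> (2 ^ k) D1 (Ks k)" and Ls_block: "\<And>k. cz_block \<omega> (2 ^ k) D2 (Ls k)"
begin

sublocale Ks: cz_building_block \<omega> "2 ^ k" D1 "Ks k" for k
  using exponent_pos Ks_block by unfold_locales auto

sublocale Ls: cz_building_block \<omega> "2 ^ k" D2 "Ls k" for k
  using exponent_pos Ls_block by unfold_locales auto

definition Ks_upto :: "nat \<Rightarrow> int \<Rightarrow> complex" where
  "Ks_upto u = (\<lambda>x. \<Sum>k\<le>u. Ks k x)"

definition Ls_below :: "nat \<Rightarrow> int \<Rightarrow> complex" where
  "Ls_below u = (\<lambda>x. \<Sum>l<u. Ls l x)"

definition piece :: "nat \<Rightarrow> int \<Rightarrow> complex" where
  "piece u = (\<lambda>x. conv (Ks_upto u) (Ls u) x + conv (Ls_below u) (Ks u) x)"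

lemma supported_Ks: "k \<le> u \<Longrightarrow> supported_in (2 ^ u) (Ks k)"
  by (rule supported_in_mono[OF Ks.supported]) simp

lemma supported_Ls: "k \<le> u \<Longrightarrow> supported_in (2 ^ u) (Ls k)"
  by (rule supported_in_mono[OF Ls.supported]) simp

lemma supported_Ks_upto: "supported_in (2 ^ u) (Ks_upto u)"
  unfolding Ks_upto_def by (rule supported_in_sum) (auto intro: supported_Ks)

lemma supported_Ls_below: "supported_in (2 ^ u) (Ls_below u)"
  unfolding Ls_below_def by (rule supported_in_sum) (auto intro: supported_Ls)

lemma supported_piece: "supported_in (2 ^ Suc u) (piece u)"
proof -
  have "(2::int) ^ Suc u = 2 ^ u + 2 ^ u" by simp
  then show ?thesis unfolding piece_def
    by (simp only:) (intro supported_in_add supported_in_conv supported_Ks_upto supported_Ls_below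
        Ks.supported Ls.supported)
qed

lemma sum_piece: "(\<Sum>\<^sub>\<infinity>x. piece u x) = 0"
proof -
  have supported: "supported_in (2 ^ u + 2 ^ u) (conv (Ks_upto u) (Ls u))"
    "supported_in (2 ^ u + 2 ^ u) (conv (Ls_below u) (Ks u))"
    by (intro supported_in_conv supported_Ks_upto supported_Ls_below Ks.supported Ls.supported)+
  have "(\<Sum>\<^sub>\<infinity>x. piece u x)
      = fourier (conv (Ks_upto u) (Ls u)) 0 + fourier (conv (Ls_below u) (Ks u)) 0"
    unfolding piece_def fourier_zero
    by (intro infsum_add summable_on_int_interval supported_inD[OF supported(1)] supported_inD[OF supported(2)])
  also have "\<dots> = 0"
    using fourier_conv[OF supported_Ks_upto Ls.supported] fourier_conv[OF supported_Ls_below Ks.supported]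
      Ks.fourier_at_zero Ls.fourier_at_zero by simp
  finally show ?thesis .
qed

lemma infsum_norm_sq_conv_pair_le:
  assumes "supported_in R g" "supported_in R h" "2 ^ u \<le> R"
    and "(\<Sum>\<^sub>\<infinity>x. (cmod (g x))\<^sup>2) \<le> D2\<^sup>2 * w" "(\<Sum>\<^sub>\<infinity>x. (cmod (h x))\<^sup>2) \<le> D1\<^sup>2 * w"
  shows "(\<Sum>\<^sub>\<infinity>x. (cmod (conv (Ks_upto u) g x + conv (Ls_below u) h x))\<^sup>2)
           \<le> 4 * (fourier_sum_bound \<omega>)\<^sup>2 * D1\<^sup>2 * D2\<^sup>2 * w"
proof -
  let ?c = "fourier_sum_bound \<omega>"
  have R: "0 \<le> R" by (rule order_trans[OF _ assms(3)]) simp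
  have K: "supported_in R (Ks_upto u)" by (rule supported_in_mono[OF supported_Ks_upto assms(3)])
  have L: "supported_in R (Ls_below u)" by (rule supported_in_mono[OF supported_Ls_below assms(3)])
  have "cmod (fourier (Ks_upto u) \<xi>) \<le> ?c * D1" for \<xi>
    unfolding Ks_upto_def by (rule norm_fourier_dyadic_sum_le[OF exponent_pos Ks_block]) simp
  then have "(\<Sum>\<^sub>\<infinity>x. (cmod (conv (Ks_upto u) g x))\<^sup>2) \<le> (?c * D1)\<^sup>2 * (\<Sum>\<^sub>\<infinity>x. (cmod (g x))\<^sup>2)"
    by (rule infsum_norm_conv_le[OF K assms(1) R])
  also have "\<dots> \<le> (?c * D1)\<^sup>2 * (D2\<^sup>2 * w)" by (rule mult_left_mono[OF assms(4)]) simp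
  finally have K_part: "(\<Sum>\<^sub>\<infinity>x. (cmod (conv (Ks_upto u) g x))\<^sup>2) \<le> (?c * D1)\<^sup>2 * (D2\<^sup>2 * w)" .
  have "cmod (fourier (Ls_below u) \<xi>) \<le> ?c * D2" for \<xi>
    unfolding Ls_below_def by (rule norm_fourier_dyadic_sum_le[OF exponent_pos Ls_block]) simp
  then have "(\<Sum>\<^sub>\<infinity>x. (cmod (conv (Ls_below u) h x))\<^sup>2) \<le> (?c * D2)\<^sup>2 * (\<Sum>\<^sub>\<infinity>x. (cmod (h x))\<^sup>2)"
    by (rule infsum_norm_conv_le[OF L assms(2) R])
  also have "\<dots> \<le> (?c * D2)\<^sup>2 * (D1\<^sup>2 * w)" by (rule mult_left_mono[OF assms(5)]) simp
  finally have L_part: "(\<Sum>\<^sub>\<infinity>x. (cmod (conv (Ls_below u) h x))\<^sup>2) \<le> (?c * D2)\<^sup>2 * (D1\<^sup>2 * w)" .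
  have "(\<Sum>\<^sub>\<infinity>x. (cmod (conv (Ks_upto u) g x + conv (Ls_below u) h x))\<^sup>2)
      \<le> 2 * ((?c * D1)\<^sup>2 * (D2\<^sup>2 * w)) + 2 * ((?c * D2)\<^sup>2 * (D1\<^sup>2 * w))"
    using infsum_norm_sq_add_le[OF supported_in_conv[OF K assms(1)] supported_in_conv[OF L assms(2)]]
      K_part L_part by linarith
  then show ?thesis by (simp add: power_mult_distrib algebra_simps)
qed

lemma conv_bound_sq:
  "(conv_bound \<omega> * D1 * D2)\<^sup>2 = 8 * 2 powr \<omega> * ((fourier_sum_bound \<omega>)\<^sup>2 * D1\<^sup>2 * D2\<^sup>2)"
  unfolding conv_bound_def by (simp add: power_mult_distrib)

lemma infsum_norm_sq_piece_le:
  "(\<Sum>\<^sub>\<infinity>x. (cmod (piece u x))\<^sup>2) \<le> (conv_bound \<omega> * D1 * D2)\<^sup>2 / real_of_int (2 ^ Suc u)"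
proof -
  define E where "E = (fourier_sum_bound \<omega>)\<^sup>2 * D1\<^sup>2 * D2\<^sup>2"
  have "(\<Sum>\<^sub>\<infinity>x. (cmod (piece u x))\<^sup>2) \<le> 4 * (fourier_sum_bound \<omega>)\<^sup>2 * D1\<^sup>2 * D2\<^sup>2 * (1 / 2 ^ u)"
    unfolding piece_def using Ls.infsum_norm_sq_le[of u] Ks.infsum_norm_sq_le[of u]
    by (intro infsum_norm_sq_conv_pair_le[where R = "2 ^ u"] Ls.supported Ks.supported) auto
  also have "\<dots> = 4 * E / 2 ^ u" unfolding E_def by simp
  also have "\<dots> \<le> 4 * E * 2 powr \<omega> / 2 ^ u"
  proof -
    have "1 \<le> (2::real) powr \<omega>" using exponent_pos by (intro ge_one_powr_ge_zero) auto
    then have "4 * E * 1 \<le> 4 * E * 2 powr \<omega>" unfolding E_def by (intro mult_left_mono) auto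
    then show ?thesis by (intro divide_right_mono) auto
  qed
  also have "\<dots> = (conv_bound \<omega> * D1 * D2)\<^sup>2 / real_of_int (2 ^ Suc u)"
    unfolding conv_bound_sq E_def[symmetric] by simp
  finally show ?thesis .
qed

lemma infsum_norm_sq_diff_piece_le:
  "(\<Sum>\<^sub>\<infinity>x. (cmod (piece u (x + h) - piece u x))\<^sup>2)
     \<le> (conv_bound \<omega> * D1 * D2)\<^sup>2 / real_of_int (2 ^ Suc u)
        * (real_of_int \<bar>h\<bar> / real_of_int (2 ^ Suc u)) powr \<omega>"
proof -
  define E where "E = (fourier_sum_bound \<omega>)\<^sup>2 * D1\<^sup>2 * D2\<^sup>2"
  define X where "X = (real_of_int \<bar>h\<bar> / 2 ^ u) powr \<omega>"
  have diff: "piece u (x + h) - piece u x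
      = conv (Ks_upto u) (\<lambda>z. Ls u (z + h) - Ls u z) x + conv (Ls_below u) (\<lambda>z. Ks u (z + h) - Ks u z) x"
    for x
    unfolding piece_def conv_translate conv_diff_right[OF supported_Ks_upto]
      conv_diff_right[OF supported_Ls_below] by simp
  have "(\<Sum>\<^sub>\<infinity>x. (cmod (piece u (x + h) - piece u x))\<^sup>2)
      \<le> 4 * (fourier_sum_bound \<omega>)\<^sup>2 * D1\<^sup>2 * D2\<^sup>2 * (X / 2 ^ u)"
    unfolding diff using Ls.infsum_norm_diff_sq_le[of u h] Ks.infsum_norm_diff_sq_le[of u h]
    by (intro infsum_norm_sq_conv_pair_le[where R = "2 ^ u + \<bar>h\<bar>"]
        supported_in_diff_translate Ls.supported Ks.supported) (auto simp: X_def)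
  also have "\<dots> = 4 * E * X / 2 ^ u" unfolding E_def by simp
  also have "\<dots> = (conv_bound \<omega> * D1 * D2)\<^sup>2 / real_of_int (2 ^ Suc u)
        * (real_of_int \<bar>h\<bar> / real_of_int (2 ^ Suc u)) powr \<omega>"
  proof -
    have "(real_of_int \<bar>h\<bar> / real_of_int (2 ^ Suc u)) powr \<omega> = ((\<bar>h\<bar> / 2 ^ u) / 2) powr \<omega>"
      by (simp add: mult.commute)
    also have "\<dots> = X / 2 powr \<omega>" unfolding X_def by (rule powr_divide; simp)
    finally show ?thesis unfolding conv_bound_sq E_def[symmetric] by simp
  qed
  finally show ?thesis .
qed

lemma cz_block_piece: "cz_block \<omega> (2 ^ Suc u) (conv_bound \<omega> * D1 * D2) (piece u)"
  unfolding cz_block_def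
proof (intro conjI allI impI)
  show "0 < conv_bound \<omega> * D1 * D2"
    using fourier_sum_bound_pos[OF exponent_pos] Ks.constant_pos Ls.constant_pos
    unfolding conv_bound_def by simp
  fix x assume "piece u x \<noteq> 0"
  then show "- (2 ^ Suc u) \<le> x" "x \<le> 2 ^ Suc u" using supported_piece[of u] unfolding supported_in_def by auto
qed (simp_all only: sum_piece infsum_norm_sq_piece_le infsum_norm_sq_diff_piece_le)

lemma conv_partial_sums: "conv (\<lambda>x. \<Sum>k<N. Ks k x) (\<lambda>x. \<Sum>l<N. Ls l x) x = (\<Sum>u<N. piece u x)"
proof -
  define c where "c k l = conv (Ks k) (Ls l) x" for k l
  have "conv (\<lambda>x. \<Sum>k<N. Ks k x) (\<lambda>x. \<Sum>l<N. Ls l x) x = (\<Sum>k<N. conv (Ks k) (\<lambda>x. \<Sum>l<N. Ls l x) x)"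
    by (rule conv_sum_left[where R = "2 ^ N"]) (simp add: supported_Ks)
  also have "\<dots> = (\<Sum>k<N. \<Sum>l<N. c k l)"
    unfolding c_def by (intro sum.cong refl conv_sum_right[where R = "2 ^ N"]) (simp add: supported_Ls)
  also have "\<dots> = (\<Sum>u<N. (\<Sum>k\<le>u. c k u) + (\<Sum>l<u. c u l))" by (rule sum_square_by_max)
  also have "\<dots> = (\<Sum>u<N. piece u x)"
  proof (intro sum.cong refl)
    fix u
    have "conv (Ks_upto u) (Ls u) x = (\<Sum>k\<le>u. c k u)"
      unfolding Ks_upto_def c_def by (rule conv_sum_left[where R = "2 ^ u"]) (simp add: supported_Ks)
    moreover have "conv (Ls_below u) (Ks u) x = (\<Sum>l<u. c u l)"
      unfolding Ls_below_def c_def conv_commute[of _ "Ks u"]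
      by (rule conv_sum_right[where R = "2 ^ u"]) (simp add: supported_Ls)
    ultimately show "(\<Sum>k\<le>u. c k u) + (\<Sum>l<u. c u l) = piece u x" unfolding piece_def by simp
  qed
  finally show ?thesis .
qed

lemma sums_piece:
  assumes "\<And>x. (\<lambda>k. Ks k x) sums K x" "\<And>x. (\<lambda>k. Ls k x) sums L x"
  shows "(\<lambda>u. piece u x) sums conv K L x"
proof -
  note K = cz_block_series_l2[OF Ks_block assms(1)] and L = cz_block_series_l2[OF Ls_block assms(2)]
  have "(\<lambda>N. conv (\<lambda>y. K y - (K y - (\<Sum>k<N. Ks k y))) (\<lambda>y. L y - (L y - (\<Sum>l<N. Ls l y))) x)
      \<longlonglongrightarrow> conv K L x"
    by (rule tendsto_conv_l2[OF K L])
  then have "(\<lambda>N. conv (\<lambda>y. \<Sum>k<N. Ks k y) (\<lambda>y. \<Sum>l<N. Ls l y) x) \<longlonglongrightarrow> conv K L x"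
    by (simp only: diff_diff_eq2 add_diff_cancel_left')
  then show ?thesis unfolding conv_partial_sums sums_def .
qed

end

section \<open>Calderon-Zygmund kernels\<close>

lemma cz_block_zero: "0 < D \<Longrightarrow> 0 < s \<Longrightarrow> cz_block \<omega> s D (\<lambda>_. 0)"
  unfolding cz_block_def by auto

lemma cz_rep_pos: "cz_rep \<omega> j D K \<Longrightarrow> 0 < D"
  unfolding cz_rep_def cz_block_def by auto

lemma cz_rep_obtain_blocks:
  assumes "cz_rep \<omega> j D K"
  obtains Ks where "\<And>k. k < j \<Longrightarrow> Ks k = (\<lambda>_. 0)" "\<And>k. cz_block \<omega> (2 ^ k) D (Ks k)"
    "\<And>x. (\<lambda>k. Ks k x) sums K x"
proof -
  obtain Ks where Ks: "\<forall>k<j. Ks k = (\<lambda>_. 0)" "\<forall>k\<ge>j. cz_block \<omega> (2 ^ k) D (Ks k)"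
    "\<forall>x. (\<lambda>k. Ks k x) sums K x"
    using assms unfolding cz_rep_def by blast
  have "cz_block \<omega> (2 ^ k) D (Ks k)" for k
    using Ks cz_block_zero[OF cz_rep_pos[OF assms], of "2 ^ k" \<omega>] by (cases "k < j") auto
  with Ks that show ?thesis by blast
qed

lemma cz_rep_conv:
  assumes "0 < \<omega>" "cz_rep \<omega> j D1 K" "cz_rep \<omega> j D2 L"
  shows "cz_rep \<omega> j (conv_bound \<omega> * D1 * D2) (conv K L)"
proof -
  obtain Ks where Ks: "\<And>k. k < j \<Longrightarrow> Ks k = (\<lambda>_. 0)" "\<And>k. cz_block \<omega> (2 ^ k) D1 (Ks k)"
    "\<And>x. (\<lambda>k. Ks k x) sums K x"
    using cz_rep_obtain_blocks[OF assms(2)] by blast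
  obtain Ls where Ls: "\<And>k. k < j \<Longrightarrow> Ls k = (\<lambda>_. 0)" "\<And>k. cz_block \<omega> (2 ^ k) D2 (Ls k)"
    "\<And>x. (\<lambda>k. Ls k x) sums L x"
    using cz_rep_obtain_blocks[OF assms(3)] by blast
  interpret cz_block_pair \<omega> D1 D2 Ks Ls using assms(1) Ks(2) Ls(2) by unfold_locales
  define Ns where "Ns k = (if k = 0 then (\<lambda>_. 0) else piece (k - 1))" for k
  have "piece u = (\<lambda>_. 0)" if "u < j" for u
    using Ks(1) Ls(1) that unfolding piece_def Ks_upto_def Ls_below_def conv_def by simp
  then have "Ns k = (\<lambda>_. 0)" if "k < j" for k using that unfolding Ns_def by simp
  moreover have "cz_block \<omega> (2 ^ k) (conv_bound \<omega> * D1 * D2) (Ns k)" for k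
    using cz_block_piece[of "k - 1"] cz_block_zero[of _ 1 \<omega>] cz_block_piece[of 0]
    unfolding Ns_def cz_block_def by (cases k) auto
  moreover have "(\<lambda>k. Ns k x) sums conv K L x" for x
  proof -
    have "(\<lambda>u. Ns (Suc u) x) sums conv K L x" using sums_piece[OF Ks(3) Ls(3)] by (simp add: Ns_def)
    then show ?thesis using sums_Suc_iff[of "\<lambda>k. Ns k x"] by (simp add: Ns_def)
  qed
  ultimately show ?thesis unfolding cz_rep_def by blast
qed

lemma le_mult_cInf:
  fixes S :: "real set"
  assumes "S \<noteq> {}" "\<And>x. x \<in> S \<Longrightarrow> 0 \<le> x" "\<And>x. x \<in> S \<Longrightarrow> a \<le> c * x" "0 \<le> c"
  shows "a \<le> c * Inf S"
proof (cases "c = 0")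
  case True
  then show ?thesis using assms(1,3) by fastforce
next
  case False
  then have "a / c \<le> Inf S"
    using assms by (intro cInf_greatest) (auto simp: field_simps)
  then show ?thesis using False assms(4) by (simp add: field_simps)
qed

lemma cz_norm_from_le_mult:
  assumes "\<And>D1 D2. cz_rep \<omega> j D1 K \<Longrightarrow> cz_rep \<omega> j D2 L \<Longrightarrow> cz_rep \<omega> j (C * D1 * D2) M"
    and "cz_kernel_from \<omega> j K" "cz_kernel_from \<omega> j L" "0 \<le> C"
  shows "cz_norm_from \<omega> j M \<le> C * cz_norm_from \<omega> j K * cz_norm_from \<omega> j L"
proof -
  define SK SL SM where "SK = {D. cz_rep \<omega> j D K}" and "SL = {D. cz_rep \<omega> j D L}"
    and "SM = {D. cz_rep \<omega> j D M}"
  have SK: "SK \<noteq> {}" "\<And>D. D \<in> SK \<Longrightarrow> 0 \<le> D" and SL: "SL \<noteq> {}" "\<And>D. D \<in> SL \<Longrightarrow> 0 \<le> D"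
    using assms(2,3) cz_rep_pos unfolding SK_def SL_def cz_kernel_from_def by (auto intro: less_imp_le)
  have "bdd_below SM" unfolding SM_def by (rule bdd_belowI[of _ 0]) (auto dest: cz_rep_pos)
  have "Inf SM \<le> (C * D2) * Inf SK" if "D2 \<in> SL" for D2
  proof (rule le_mult_cInf[OF SK])
    fix D1 assume "D1 \<in> SK"
    then have "C * D1 * D2 \<in> SM" using that assms(1) unfolding SK_def SL_def SM_def by blast
    then show "Inf SM \<le> C * D2 * D1" using cInf_lower[OF _ \<open>bdd_below SM\<close>] by (simp add: mult_ac)
  qed (auto intro: mult_nonneg_nonneg assms(4) SL(2)[OF that])
  moreover have "0 \<le> Inf SK" using SK by (intro cInf_greatest)
  ultimately have "Inf SM \<le> (C * Inf SK) * Inf SL"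
    by (intro le_mult_cInf[OF SL]) (auto simp: mult_ac intro: mult_nonneg_nonneg assms(4))
  then show ?thesis unfolding cz_norm_from_def SK_def SL_def SM_def .
qed

theorem lemma2p1:
  fixes \<omega> :: real
  assumes "\<omega> > 0"
  shows "\<exists>C>0. \<forall>(j::nat) K L.
           cz_kernel_from \<omega> j K \<longrightarrow> cz_kernel_from \<omega> j L \<longrightarrow>
           cz_kernel_from \<omega> j (conv K L) \<and>
           cz_norm_from \<omega> j (conv K L) \<le> C * cz_norm_from \<omega> j K * cz_norm_from \<omega> j L"
proof (intro exI[of _ "conv_bound \<omega>"] conjI allI impI)
  show "0 < conv_bound \<omega>"
    using fourier_sum_bound_pos[OF assms] unfolding conv_bound_def by simp
  fix j K L assume K: "cz_kernel_from \<omega> j K" and L: "cz_kernel_from \<omega> j L"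
  then show "cz_kernel_from \<omega> j (conv K L)"
    unfolding cz_kernel_from_def using cz_rep_conv[OF assms] by blast
  show "cz_norm_from \<omega> j (conv K L) \<le> conv_bound \<omega> * cz_norm_from \<omega> j K * cz_norm_from \<omega> j L"
    using cz_norm_from_le_mult[OF cz_rep_conv[OF assms] K L] \<open>0 < conv_bound \<omega>\<close> by simp
qed

end
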